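(* Let $n\ge 3$ and consider the cycle $C_n$ with an arbitrary initial coloring. In the Majority Model (MM): if $n$ is odd, the process always reaches a stable coloring; if $n$ is even, the process reaches a stable coloring or the blinking configuration. In the Random Majority Model (RMM): if $n$ is odd, the process (almost surely) reaches the all-white or the all-blue coloring; if $n$ is even, the process reaches the all-white coloring, the all-blue coloring, or the blinking configuration.
   Context: A coloring is a map from the nodes to $\{b,w\}$. In MM, all nodes update simultaneously: a node adopts the color strictly more frequent among its neighbors in the previous round and keeps its color in case of a tie. RMM is the same except that in case of a tie the node chooses blue or white independently and uniformly at random. A coloring is stable if one application of the update rule deterministically returns the same coloring. For even $n$, the two alternating colorings are those in which every two adjacent nodes of $C_n$ have different colors; the process is in the blinking configuration when it is in one of them (it then switches between the two forever). *)

theory Defs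
  imports "HOL-Probability.Probability"
begin

datatype color = Blue | White

type_synonym coloring = "nat \<Rightarrow> color"

text \<open>The cycle C_n has nodes 0..n-1; node i is adjacent to (i+1) mod n and (i+n-1) mod n.
  Values of a coloring at indices \<ge> n are irrelevant and are kept unchanged by the updates.\<close>

definition nbrs :: "nat \<Rightarrow> nat \<Rightarrow> nat list" where
  "nbrs n i = [(i + n - 1) mod n, (i + 1) mod n]"

definition cnt :: "nat \<Rightarrow> coloring \<Rightarrow> nat \<Rightarrow> color \<Rightarrow> nat" where
  "cnt n c i x = length (filter (\<lambda>j. c j = x) (nbrs n i))"

definition mm_step :: "nat \<Rightarrow> coloring \<Rightarrow> coloring" where
  "mm_step n c = (\<lambda>i. if i < n then
       (if cnt n c i Blue > cnt n c i White then Blue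
        else if cnt n c i White > cnt n c i Blue then White
        else c i)
     else c i)"

definition rmm_step :: "nat \<Rightarrow> coloring \<Rightarrow> (nat \<Rightarrow> bool) \<Rightarrow> coloring" where
  "rmm_step n c coin = (\<lambda>i. if i < n then
       (if cnt n c i Blue > cnt n c i White then Blue
        else if cnt n c i White > cnt n c i Blue then White
        else if coin i then Blue else White)
     else c i)"

fun rmm_traj :: "nat \<Rightarrow> coloring \<Rightarrow> (nat \<times> nat \<Rightarrow> bool) \<Rightarrow> nat \<Rightarrow> coloring" where
  "rmm_traj n c \<omega> 0 = c"
| "rmm_traj n c \<omega> (Suc t) = rmm_step n (rmm_traj n c \<omega> t) (\<lambda>i. \<omega> (t, i))"

definition coins :: "(nat \<times> nat \<Rightarrow> bool) measure" where
  "coins = PiM UNIV (\<lambda>_. measure_pmf (bernoulli_pmf (1/2)))"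

definition stable :: "nat \<Rightarrow> coloring \<Rightarrow> bool" where
  "stable n c \<longleftrightarrow> (\<forall>i<n. mm_step n c i = c i)"

definition alternating :: "nat \<Rightarrow> coloring \<Rightarrow> bool" where
  "alternating n c \<longleftrightarrow> (\<forall>i<n. c ((i + 1) mod n) \<noteq> c i)"

definition monochrome :: "nat \<Rightarrow> color \<Rightarrow> coloring \<Rightarrow> bool" where
  "monochrome n x c \<longleftrightarrow> (\<forall>i<n. c i = x)"

end

theory Submission
  imports Defs
begin

text \<open>Under MM a node that has a neighbour of its own color keeps its color and keeps such a
  neighbour, and a node without one but adjacent to one acquires one.  Hence the number of such
  nodes grows until either every node has one (a stable coloring) or none has (an alternating
  coloring, which needs n even).

  For RMM, consider the event that all coins of 2n consecutive rounds break ties towards blue.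
  Then a node is white after two rounds only if it and the node two steps further were white, so
  the white set shrinks every two rounds until it is invariant under rotation by 2; such a
  coloring is monochromatic or alternating.  The event has the same positive probability in each
  of the infinitely many disjoint blocks of 2n rounds, and the blocks are independent, so almost
  surely it happens eventually.\<close>

section \<open>Arithmetic on the cycle\<close>

definition cyc_pred :: "nat \<Rightarrow> nat \<Rightarrow> nat" where
  "cyc_pred n i = (i + n - 1) mod n"

definition cyc_succ :: "nat \<Rightarrow> nat \<Rightarrow> nat" where
  "cyc_succ n i = (i + 1) mod n"

lemma cyc_pred_less: "0 < n \<Longrightarrow> cyc_pred n i < n"
  by (simp add: cyc_pred_def)

lemma cyc_succ_less: "0 < n \<Longrightarrow> cyc_succ n i < n"
  by (simp add: cyc_succ_def)

lemma cyc_pred_succ: "i < n \<Longrightarrow> cyc_pred n (cyc_succ n i) = i"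
  unfolding cyc_pred_def cyc_succ_def
  by (cases "Suc i = n") auto

lemma cyc_succ_pred: "i < n \<Longrightarrow> cyc_succ n (cyc_pred n i) = i"
  unfolding cyc_pred_def cyc_succ_def
  by (cases i) (auto simp: mod_add_left_eq)

lemma cyc_closed_add:
  fixes n d :: nat
  assumes "\<forall>k<n. P k \<longrightarrow> P ((k + d) mod n)" "j < n" "P j"
  shows "P ((j + m * d) mod n)"
proof (induction m)
  case 0
  then show ?case using assms(2,3) by simp
next
  case (Suc m)
  have "(j + m * d) mod n < n" using assms(2) by simp
  with Suc assms(1) have "P (((j + m * d) mod n + d) mod n)" by blast
  moreover have "((j + m * d) mod n + d) mod n = (j + Suc m * d) mod n"
    by (metis mod_add_left_eq add.assoc mult_Suc add.commute)
  ultimately show ?case by simp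
qed

lemma cyc_closed_add_iff:
  fixes n d :: nat
  assumes closed: "\<forall>k<n. P k \<longrightarrow> P ((k + d) mod n)" and "k < n"
  shows "P ((k + d) mod n) \<longleftrightarrow> P k"
proof
  assume "P ((k + d) mod n)"
  then have "P (((k + d) mod n + (n - 1) * d) mod n)"
    using cyc_closed_add[OF closed] \<open>k < n\<close> by simp
  moreover have "k + d + (n - 1) * d = k + n * d"
    using \<open>k < n\<close> by (cases n) auto
  then have "((k + d) mod n + (n - 1) * d) mod n = (k + n * d) mod n"
    by (metis mod_add_left_eq)
  ultimately show "P k"
    using \<open>k < n\<close> by simp
qed (use closed \<open>k < n\<close> in blast)

lemma cyc_boundary:
  assumes "j < n" "P j" "i < n" "\<not> P i"
  shows "\<exists>k<n. P k \<and> \<not> P (cyc_succ n k)"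
proof (rule ccontr)
  assume "\<not> ?thesis"
  then have "\<forall>k<n. P k \<longrightarrow> P ((k + 1) mod n)"
    by (auto simp: cyc_succ_def)
  from cyc_closed_add[OF this \<open>j < n\<close> \<open>P j\<close>, of "i + n - j"]
  have "P ((j + (i + n - j)) mod n)" by simp
  with assms show False by simp
qed

lemma cyc_periodic:
  fixes n d :: nat
  assumes "\<forall>k<n. c ((k + d) mod n) = c k" "j < n"
  shows "c ((j + m * d) mod n) = c j"
  using cyc_closed_add[of n "\<lambda>k. c k = c j"] assms by simp

lemma color_neq_trans: "(x::color) \<noteq> y \<Longrightarrow> y \<noteq> z \<Longrightarrow> x = z"
  by (cases x; cases y; cases z) auto

section \<open>The Majority Model\<close>

lemma mm_step_eq:
  "i < n \<Longrightarrow> mm_step n c i = (if c (cyc_pred n i) = c (cyc_succ n i) then c (cyc_pred n i) else c i)"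
  unfolding mm_step_def cnt_def nbrs_def cyc_pred_def[symmetric] cyc_succ_def[symmetric]
  by (cases "c (cyc_pred n i)"; cases "c (cyc_succ n i)") auto

definition has_equal_nbr :: "nat \<Rightarrow> coloring \<Rightarrow> nat \<Rightarrow> bool" where
  "has_equal_nbr n c i \<longleftrightarrow> c (cyc_pred n i) = c i \<or> c (cyc_succ n i) = c i"

lemma mm_step_has_equal_nbr:
  "i < n \<Longrightarrow> has_equal_nbr n c i \<Longrightarrow> mm_step n c i = c i"
  by (auto simp: mm_step_eq has_equal_nbr_def)

lemma has_equal_nbr_mm_step:
  assumes "i < n" "has_equal_nbr n c i"
  shows "has_equal_nbr n (mm_step n c) i"
proof -
  have n: "0 < n" using \<open>i < n\<close> by simp
  have "has_equal_nbr n c (cyc_succ n i)" if "c (cyc_succ n i) = c i"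
    using that cyc_pred_succ[OF \<open>i < n\<close>] by (simp add: has_equal_nbr_def)
  moreover have "has_equal_nbr n c (cyc_pred n i)" if "c (cyc_pred n i) = c i"
    using that cyc_succ_pred[OF \<open>i < n\<close>] by (simp add: has_equal_nbr_def)
  ultimately show ?thesis
    using assms mm_step_has_equal_nbr cyc_pred_less[OF n] cyc_succ_less[OF n]
    by (auto simp: has_equal_nbr_def)
qed

text \<open>The two neighbours of such a node agree, so it adopts the color of its successor.\<close>
lemma has_equal_nbr_mm_step_pred:
  assumes "i < n" "\<not> has_equal_nbr n c i" "has_equal_nbr n c (cyc_succ n i)"
  shows "has_equal_nbr n (mm_step n c) i"
proof -
  have "c (cyc_pred n i) = c (cyc_succ n i)"
    using assms(2) color_neq_trans by (auto simp: has_equal_nbr_def)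
  then have "mm_step n c i = c (cyc_succ n i)"
    using assms(1) by (simp add: mm_step_eq)
  moreover have "mm_step n c (cyc_succ n i) = c (cyc_succ n i)"
    using assms mm_step_has_equal_nbr cyc_succ_less by simp
  ultimately show ?thesis
    by (simp add: has_equal_nbr_def)
qed

lemma card_has_equal_nbr_mm_step:
  assumes "j < n" "has_equal_nbr n c j" "i < n" "\<not> has_equal_nbr n c i"
  shows "card {k. k < n \<and> has_equal_nbr n c k} < card {k. k < n \<and> has_equal_nbr n (mm_step n c) k}"
proof (rule psubset_card_mono)
  obtain k where "k < n" "\<not> has_equal_nbr n c k" "has_equal_nbr n c (cyc_succ n k)"
    using cyc_boundary[of i n "\<lambda>k. \<not> has_equal_nbr n c k", OF assms(3,4,1)] assms(2) by auto
  then show "{k. k < n \<and> has_equal_nbr n c k} \<subset> {k. k < n \<and> has_equal_nbr n (mm_step n c) k}"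
    using has_equal_nbr_mm_step has_equal_nbr_mm_step_pred by blast
qed simp

lemma mm_reaches_stable_or_alternating:
  "\<exists>t. stable n ((mm_step n ^^ t) c) \<or> alternating n ((mm_step n ^^ t) c)"
proof (induction c rule: measure_induct_rule[of "\<lambda>c. n - card {k. k < n \<and> has_equal_nbr n c k}"])
  case (less c)
  consider "\<forall>i<n. has_equal_nbr n c i" | "\<forall>i<n. \<not> has_equal_nbr n c i"
    | j i where "j < n" "has_equal_nbr n c j" "i < n" "\<not> has_equal_nbr n c i"
    by blast
  then show ?case
  proof cases
    case 1
    then have "stable n c"
      by (simp add: stable_def mm_step_has_equal_nbr)
    then show ?thesis
      by (metis funpow_0)
  next
    case 2
    then have "alternating n c"
      by (auto simp: alternating_def has_equal_nbr_def cyc_succ_def)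
    then show ?thesis
      by (metis funpow_0)
  next
    case 3
    have "card {k. k < n \<and> has_equal_nbr n (mm_step n c) k} \<le> n"
      by (rule order_trans[OF card_mono[of "{..<n}"]]) auto
    with card_has_equal_nbr_mm_step[OF 3]
    have "n - card {k. k < n \<and> has_equal_nbr n (mm_step n c) k}
        < n - card {k. k < n \<and> has_equal_nbr n c k}"
      by linarith
    then obtain t where "stable n ((mm_step n ^^ t) (mm_step n c))
        \<or> alternating n ((mm_step n ^^ t) (mm_step n c))"
      using less by blast
    then show ?thesis
      by (metis funpow_Suc_right o_apply)
  qed
qed

section \<open>Colorings invariant under rotation by two\<close>

lemma alternating_period2:
  assumes "alternating n c" "k < n"
  shows "c ((k + 2) mod n) = c k"
proof -
  have "(k + 1) mod n < n" using \<open>k < n\<close> by simp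
  then have "c (((k + 1) mod n + 1) mod n) \<noteq> c ((k + 1) mod n)"
    using assms(1) by (simp add: alternating_def)
  moreover have "((k + 1) mod n + 1) mod n = (k + 2) mod n"
    by (simp add: mod_Suc_eq)
  ultimately show ?thesis
    using assms color_neq_trans by (auto simp: alternating_def)
qed

text \<open>On an odd cycle, shifting by 2 a total of (n + 1)/2 times is a shift by 1.\<close>
lemma period2_odd_shift1:
  fixes n :: nat
  assumes "odd n" "\<forall>k<n. c ((k + 2) mod n) = c k" "k < n"
  shows "c ((k + 1) mod n) = c k"
proof -
  have "c ((k + ((n + 1) div 2) * 2) mod n) = c k"
    using cyc_periodic[OF assms(2,3)] .
  moreover have "k + ((n + 1) div 2) * 2 = (k + 1) + n"
    using \<open>odd n\<close> by presburger
  ultimately show ?thesis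
    by (metis mod_add_self2)
qed

lemma not_alternating_odd:
  assumes "odd n"
  shows "\<not> alternating n c"
proof
  assume alt: "alternating n c"
  have n: "0 < n"
    using \<open>odd n\<close> odd_pos by blast
  have "c ((0 + 1) mod n) = c 0"
    using period2_odd_shift1[OF \<open>odd n\<close> _ n] alternating_period2[OF alt] by blast
  moreover have "c ((0 + 1) mod n) \<noteq> c 0"
    using alt n unfolding alternating_def by blast
  ultimately show False
    by contradiction
qed

definition absorbed :: "nat \<Rightarrow> coloring \<Rightarrow> bool" where
  "absorbed n c \<longleftrightarrow> monochrome n White c \<or> monochrome n Blue c \<or> alternating n c"

lemma monochrome_absorbed: "monochrome n x c \<Longrightarrow> absorbed n c"
  by (cases x) (simp_all add: absorbed_def)

lemma period2_absorbed:
  assumes n: "0 < n" and period: "\<forall>k<n. c ((k + 2) mod n) = c k"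
  shows "absorbed n c"
proof (cases "odd n")
  case True
  then have shift1: "\<forall>k<n. c ((k + 1) mod n) = c k"
    using period2_odd_shift1[OF True period] by blast
  have "c k = c 0" if "k < n" for k
    using cyc_periodic[OF shift1 n, of k] that by simp
  then have "monochrome n (c 0) c"
    unfolding monochrome_def by blast
  then show ?thesis
    by (rule monochrome_absorbed)
next
  case False
  then have even: "even n" by simp
  with n have two: "2 \<le> n" by (simp add: dvd_imp_le)
  have parity: "c k = c (k mod 2)" if "k < n" for k
  proof -
    have "k mod 2 < n" using two by (simp add: order_less_le_trans)
    from cyc_periodic[OF period this, of "k div 2"] show ?thesis
      using that by simp
  qed
  show ?thesis
  proof (cases "c 0 = c 1")
    case True
    have "c k = c 0" if "k < n" for k
      using parity[OF that] True by (cases "odd k") (simp_all add: mod_2_eq_odd)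
    then have "monochrome n (c 0) c"
      unfolding monochrome_def by blast
    then show ?thesis
      by (rule monochrome_absorbed)
  next
    case False
    have "c ((k + 1) mod n) \<noteq> c k" if "k < n" for k
    proof -
      have "(k + 1) mod n mod 2 = (k + 1) mod 2"
        using even by (simp add: mod_mod_cancel)
      then show ?thesis
        using parity[OF that] parity[of "(k + 1) mod n"] n False
        by (cases "odd k") (simp_all add: mod_2_eq_odd)
    qed
    then show ?thesis
      by (simp add: absorbed_def alternating_def)
  qed
qed

section \<open>The Random Majority Model\<close>

definition rmm_blue_step :: "nat \<Rightarrow> coloring \<Rightarrow> coloring" where
  "rmm_blue_step n c = rmm_step n c (\<lambda>_. True)"

lemma rmm_step_all_True: "(\<And>i. i < n \<Longrightarrow> coin i) \<Longrightarrow> rmm_step n c coin = rmm_blue_step n c"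
  by (auto simp: rmm_blue_step_def rmm_step_def)

lemma rmm_blue_step_White_iff:
  "i < n \<Longrightarrow> rmm_blue_step n c i = White \<longleftrightarrow> c (cyc_pred n i) = White \<and> c (cyc_succ n i) = White"
  unfolding rmm_blue_step_def rmm_step_def cnt_def nbrs_def cyc_pred_def[symmetric] cyc_succ_def[symmetric]
  by (cases "c (cyc_pred n i)"; cases "c (cyc_succ n i)") auto

lemma rmm_blue_step_twice_White:
  assumes "i < n" "(rmm_blue_step n ^^ 2) c i = White"
  shows "c i = White \<and> c ((i + 2) mod n) = White"
proof -
  have "rmm_blue_step n c (cyc_succ n i) = White"
    using assms rmm_blue_step_White_iff by (simp add: numeral_2_eq_2)
  then show ?thesis
    using assms(1) rmm_blue_step_White_iff[of "cyc_succ n i"] cyc_succ_less cyc_pred_succ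
    by (simp add: cyc_succ_def mod_Suc_eq)
qed

lemma rmm_blue_steps_absorbed:
  assumes "0 < n"
  shows "\<exists>k \<le> 2 * card {i. i < n \<and> c i = White}. absorbed n ((rmm_blue_step n ^^ k) c)"
proof (induction c rule: measure_induct_rule[of "\<lambda>c. card {i. i < n \<and> c i = White}"])
  case (less c)
  let ?c2 = "(rmm_blue_step n ^^ 2) c"
  have subset: "{i. i < n \<and> ?c2 i = White} \<subseteq> {i. i < n \<and> c i = White}"
    using rmm_blue_step_twice_White by blast
  show ?case
  proof (cases "{i. i < n \<and> ?c2 i = White} = {i. i < n \<and> c i = White}")
    case True
    then have "\<forall>k<n. c k = White \<longrightarrow> c ((k + 2) mod n) = White"
      using rmm_blue_step_twice_White by blast
    then have "\<forall>k<n. c ((k + 2) mod n) = c k"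
      using cyc_closed_add_iff[of n "\<lambda>k. c k = White"]
      by (metis (full_types) color.distinct color.exhaust)
    then have "absorbed n c"
      by (rule period2_absorbed[OF assms])
    then show ?thesis
      by (intro exI[of _ 0]) simp
  next
    case False
    with subset have "card {i. i < n \<and> ?c2 i = White} < card {i. i < n \<and> c i = White}"
      by (intro psubset_card_mono) auto
    with less obtain k where k: "k \<le> 2 * card {i. i < n \<and> ?c2 i = White}"
        "absorbed n ((rmm_blue_step n ^^ k) ?c2)"
      by blast
    then have "absorbed n ((rmm_blue_step n ^^ (k + 2)) c)"
      by (simp only: funpow_add comp_apply)
    moreover have "k + 2 \<le> 2 * card {i. i < n \<and> c i = White}"
      using k(1) \<open>card _ < card _\<close> by linarith
    ultimately show ?thesis
      by (intro exI[of _ "k + 2"] conjI)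
  qed
qed

lemma rmm_traj_all_True:
  assumes "\<And>s i. s < m \<Longrightarrow> i < n \<Longrightarrow> \<omega> (t + s, i)"
  shows "rmm_traj n c \<omega> (t + m) = (rmm_blue_step n ^^ m) (rmm_traj n c \<omega> t)"
  using assms by (induction m) (simp_all add: rmm_step_all_True)

lemma (in product_prob_space) indep_vars_components:
  assumes "I \<noteq> {}"
  shows "prob_space.indep_vars (PiM I M) M (\<lambda>i \<omega>. \<omega> i) I"
proof -
  interpret P: prob_space "PiM I M" by (rule prob_space_PiM) (simp add: M.prob_space_axioms)
  have "distr (PiM I M) (PiM I M) (\<lambda>\<omega>. \<lambda>i\<in>I. \<omega> i) = PiM I M"
    by (subst distr_cong[OF refl refl, where g = "\<lambda>\<omega>. \<omega>"]) (auto simp: space_PiM)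
  also have "\<dots> = PiM I (\<lambda>i. distr (PiM I M) (M i) (\<lambda>\<omega>. \<omega> i))"
    by (intro PiM_cong refl) (simp add: PiM_component)
  finally show ?thesis
    by (subst P.indep_vars_iff_distr_eq_PiM'[OF assms]) auto
qed

lemma measurable_all_True:
  assumes "finite J" "J \<subseteq> I"
  shows "(\<lambda>f. \<forall>j\<in>J. f j) \<in> PiM I (\<lambda>_. measure_pmf p) \<rightarrow>\<^sub>M count_space UNIV"
proof -
  have "(\<lambda>f. f j) \<in> PiM I (\<lambda>_. measure_pmf p) \<rightarrow>\<^sub>M count_space UNIV" if "j \<in> J" for j
    using measurable_component_singleton[of j I "\<lambda>_. measure_pmf p"] assms(2) that by auto
  then show ?thesis
    by (intro pred_intros_finite(3) assms(1)) (auto simp: pred_def)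
qed

lemma measure_bernoulli_all_True:
  assumes "finite J" "0 \<le> q" "q \<le> 1"
  shows "measure (PiM UNIV (\<lambda>_. measure_pmf (bernoulli_pmf q))) {\<omega>. \<forall>j\<in>J. \<omega> j} = q ^ card J"
proof -
  interpret product_prob_space "\<lambda>_. measure_pmf (bernoulli_pmf q)" UNIV
    by unfold_locales
  have "{\<omega>. \<forall>j\<in>J. \<omega> j} = {\<omega> \<in> space (PiM UNIV (\<lambda>_. measure_pmf (bernoulli_pmf q))). \<forall>j\<in>J. \<omega> j \<in> {True}}"
    by (simp add: space_PiM)
  then have "emeasure (PiM UNIV (\<lambda>_. measure_pmf (bernoulli_pmf q))) {\<omega>. \<forall>j\<in>J. \<omega> j}
      = (\<Prod>j\<in>J. emeasure (measure_pmf (bernoulli_pmf q)) {True})"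
    using emeasure_PiM_Collect[of J "\<lambda>_. {True}"] assms(1) by simp
  also have "\<dots> = ennreal (q ^ card J)"
    using assms by (simp add: emeasure_pmf_single ennreal_power)
  finally show ?thesis
    using assms by (simp add: emeasure_eq_measure)
qed

lemma indep_vars_all_True_blocks:
  assumes "disjoint_family J" "\<And>k. finite (J k)"
  shows "prob_space.indep_vars (PiM UNIV (\<lambda>_. measure_pmf p)) (\<lambda>_. count_space UNIV)
           (\<lambda>k \<omega>. \<forall>j\<in>J k. \<omega> j) UNIV"
proof -
  interpret P: product_prob_space "\<lambda>_. measure_pmf p" UNIV
    by unfold_locales
  have "P.indep_vars (\<lambda>k. PiM (J k) (\<lambda>_. measure_pmf p)) (\<lambda>k \<omega>. restrict \<omega> (J k)) UNIV"
    using P.indep_vars_restrict[OF P.indep_vars_components _ assms(1)] by simp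
  then have "P.indep_vars (\<lambda>_. count_space UNIV) (\<lambda>k \<omega>. \<forall>j\<in>J k. restrict \<omega> (J k) j) UNIV"
    using measurable_all_True[OF assms(2) order_refl] by (rule P.indep_vars_compose2)
  then show ?thesis
    by simp
qed

text \<open>Second Borel-Cantelli lemma in its simplest form: by independence, none of the first N + 1
  blocks is all True with probability (1 - q ^ m) ^ (N + 1).\<close>
lemma AE_bernoulli_some_block_all_True:
  fixes J :: "nat \<Rightarrow> 'i set"
  assumes q: "0 < q" "q \<le> 1" and disj: "disjoint_family J"
    and fin: "\<And>k. finite (J k)" and card: "\<And>k. card (J k) = m"
  shows "AE \<omega> in PiM UNIV (\<lambda>_. measure_pmf (bernoulli_pmf q)). \<exists>k. \<forall>j\<in>J k. \<omega> j"
proof -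
  define M where "M = PiM UNIV (\<lambda>_::'i. measure_pmf (bernoulli_pmf q))"
  interpret P: prob_space M
    unfolding M_def by (intro prob_space_PiM) (simp add: prob_space_measure_pmf)
  define B where "B k = {\<omega>. \<not> (\<forall>j\<in>J k. \<omega> j)}" for k
  have space: "space M = UNIV"
    by (simp add: M_def space_PiM)
  have indep: "P.indep_vars (\<lambda>_. count_space UNIV) (\<lambda>k \<omega>. \<forall>j\<in>J k. \<omega> j) UNIV"
    unfolding M_def using disj fin by (rule indep_vars_all_True_blocks)
  have B_eq: "B k = (\<lambda>\<omega>. \<forall>j\<in>J k. \<omega> j) -` {False} \<inter> space M" for k
    by (auto simp: B_def space)
  have B_sets: "B k \<in> P.events" for k
    unfolding B_eq using measurable_all_True[OF fin subset_UNIV] by (simp add: M_def)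
  have prob_B: "P.prob (B k) = 1 - q ^ m" for k
  proof -
    have all_True_sets: "{\<omega>. \<forall>j\<in>J k. \<omega> j} \<in> P.events"
      using measurable_sets[OF measurable_all_True[OF fin subset_UNIV], of "{True}" k]
      by (simp add: M_def space_PiM vimage_def)
    have "B k = space M - {\<omega>. \<forall>j\<in>J k. \<omega> j}"
      by (auto simp: B_def space)
    then have "P.prob (B k) = 1 - P.prob {\<omega>. \<forall>j\<in>J k. \<omega> j}"
      using P.prob_compl[OF all_True_sets] by simp
    then show ?thesis
      using measure_bernoulli_all_True[OF fin] q card by (simp add: M_def)
  qed
  have "P.prob (\<Inter>k\<le>N. B k) = (\<Prod>k\<le>N. P.prob (B k))" for N
    unfolding B_eq by (rule P.indep_varsD[OF indep]) auto
  then have prob_no_block: "P.prob (\<Inter>k\<le>N. B k) = (1 - q ^ m) ^ Suc N" for N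
    by (simp add: prob_B)
  have "(\<lambda>N. (1 - q ^ m) ^ Suc N) \<longlonglongrightarrow> 0"
    using q by (intro LIMSEQ_Suc LIMSEQ_power_zero) (simp add: power_le_one)
  moreover have "P.prob (\<Inter>k. B k) \<le> (1 - q ^ m) ^ Suc N" for N
    unfolding prob_no_block[symmetric] using B_sets
    by (intro P.finite_measure_mono) auto
  ultimately have "P.prob (\<Inter>k. B k) = 0"
    by (intro antisym LIMSEQ_le_const) (auto simp: measure_nonneg)
  then have "AE \<omega> in M. \<omega> \<notin> (\<Inter>k. B k)"
    using B_sets by (subst P.prob_eq_0[symmetric]) auto
  then show ?thesis
    unfolding M_def by (simp add: B_def)
qed

lemma disjoint_family_blocks: "disjoint_family (\<lambda>k::nat. {k * L..<k * L + L})"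
  unfolding disjoint_family_on_def
proof (intro ballI impI)
  fix k k' :: nat
  assume "k \<noteq> k'"
  have "x div L = k" if "x \<in> {k * L..<k * L + L}" for x k
    using that by (intro div_nat_eqI) (auto simp: mult.commute)
  then show "{k * L..<k * L + L} \<inter> {k' * L..<k' * L + L} = {}"
    using \<open>k \<noteq> k'\<close> by blast
qed

lemma AE_rmm_traj_absorbed:
  assumes n: "0 < n"
  shows "AE \<omega> in coins. \<exists>t. absorbed n (rmm_traj n c \<omega> t)"
proof -
  define J where "J k = {k * (2 * n)..<k * (2 * n) + 2 * n} \<times> {..<n}" for k
  have disj: "disjoint_family J"
    using disjoint_family_blocks[of "2 * n"] unfolding disjoint_family_on_def J_def by blast
  have "AE \<omega> in coins. \<exists>k. \<forall>j\<in>J k. \<omega> j"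
    unfolding coins_def
    by (rule AE_bernoulli_some_block_all_True[OF _ _ disj, where m = "2 * n * n"])
      (auto simp: J_def card_cartesian_product)
  then show ?thesis
  proof (rule eventually_mono)
    fix \<omega> :: "nat \<times> nat \<Rightarrow> bool"
    assume "\<exists>k. \<forall>j\<in>J k. \<omega> j"
    then obtain k where block: "\<forall>j\<in>J k. \<omega> j" by blast
    let ?c = "rmm_traj n c \<omega> (k * (2 * n))"
    obtain m where m: "m \<le> 2 * card {i. i < n \<and> ?c i = White}"
        "absorbed n ((rmm_blue_step n ^^ m) ?c)"
      using rmm_blue_steps_absorbed[OF n] by blast
    have "card {i. i < n \<and> ?c i = White} \<le> n"
      by (rule order_trans[OF card_mono[of "{..<n}"]]) auto
    with m(1) have "m \<le> 2 * n"
      by linarith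
    then have "rmm_traj n c \<omega> (k * (2 * n) + m) = (rmm_blue_step n ^^ m) ?c"
      using block by (intro rmm_traj_all_True) (auto simp: J_def)
    with m(2) show "\<exists>t. absorbed n (rmm_traj n c \<omega> t)"
      by metis
  qed
qed

theorem theorem2p7:
  fixes n :: nat and c :: coloring
  assumes "n \<ge> 3"
  shows "(odd n \<longrightarrow> (\<exists>t. stable n ((mm_step n ^^ t) c)))
       \<and> (even n \<longrightarrow> (\<exists>t. stable n ((mm_step n ^^ t) c) \<or> alternating n ((mm_step n ^^ t) c)))
       \<and> (odd n \<longrightarrow> (AE \<omega> in coins. \<exists>t.
              monochrome n White (rmm_traj n c \<omega> t) \<or> monochrome n Blue (rmm_traj n c \<omega> t)))
       \<and> (even n \<longrightarrow> (AE \<omega> in coins. \<exists>t.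
              monochrome n White (rmm_traj n c \<omega> t) \<or> monochrome n Blue (rmm_traj n c \<omega> t)
              \<or> alternating n (rmm_traj n c \<omega> t)))"
proof -
  have mm: "\<exists>t. stable n ((mm_step n ^^ t) c) \<or> alternating n ((mm_step n ^^ t) c)"
    by (rule mm_reaches_stable_or_alternating)
  have rmm: "AE \<omega> in coins. \<exists>t. absorbed n (rmm_traj n c \<omega> t)"
    using assms by (intro AE_rmm_traj_absorbed) simp
  show ?thesis
  proof (intro conjI impI)
    assume "odd n"
    then show "\<exists>t. stable n ((mm_step n ^^ t) c)"
      using mm not_alternating_odd by blast
  next
    assume "odd n"
    from rmm show "AE \<omega> in coins. \<exists>t.
        monochrome n White (rmm_traj n c \<omega> t) \<or> monochrome n Blue (rmm_traj n c \<omega> t)"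
      by (rule eventually_mono) (simp add: absorbed_def not_alternating_odd[OF \<open>odd n\<close>])
  next
    from rmm show "AE \<omega> in coins. \<exists>t.
        monochrome n White (rmm_traj n c \<omega> t) \<or> monochrome n Blue (rmm_traj n c \<omega> t)
        \<or> alternating n (rmm_traj n c \<omega> t)"
      by (rule eventually_mono) (simp add: absorbed_def)
  qed (use mm in simp)
qed

end
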